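(* Let $G=(V,E)$ be a graph on $n$ vertices with minimum degree $m$, where $m\to\infty$ as $n\to\infty$. For every $\varepsilon>0$ there exists a constant $k_\varepsilon$ such that if $k\geq k_\varepsilon$ then with high probability $G_k$ contains a path of length at least $(1-\varepsilon)m$.
   Context: For a fixed graph $G=(V,E)$ and a positive integer $k$, the random graph $G_k$ is obtained by letting each vertex $v\in V$ independently choose $k$ random neighbors of $v$ in $G$ (uniformly from its $G$-neighborhood), the edges of $G_k$ being all pairs $\{v,w\}$ such that $v$ chose $w$ or $w$ chose $v$. $G$ is one member of a sequence of graphs with $n\to\infty$; "with high probability" means with probability tending to $1$ as $n\to\infty$ (equivalently, as $m\to\infty$). *)

theory Defs
  imports "HOL-Probability.Probability"
begin

definition simple_graph :: "'a set \<Rightarrow> ('a \<Rightarrow> 'a \<Rightarrow> bool) \<Rightarrow> bool" where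
  "simple_graph V E \<longleftrightarrow> finite V \<and> (\<forall>v w. E v w \<longrightarrow> v \<in> V \<and> w \<in> V)
      \<and> (\<forall>v w. E v w \<longrightarrow> E w v) \<and> (\<forall>v. \<not> E v v)"

definition nbrs :: "'a set \<Rightarrow> ('a \<Rightarrow> 'a \<Rightarrow> bool) \<Rightarrow> 'a \<Rightarrow> 'a set" where
  "nbrs V E v = {w \<in> V. E v w}"

definition min_degree :: "'a set \<Rightarrow> ('a \<Rightarrow> 'a \<Rightarrow> bool) \<Rightarrow> nat" where
  "min_degree V E = Min ((\<lambda>v. card (nbrs V E v)) ` V)"

text \<open>Choice distribution of a single vertex: a uniformly random set of k
distinct neighbours (if the degree is below k, all neighbours are taken;
this never matters asymptotically since the minimum degree tends to infinity).\<close>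

definition choice_pmf :: "'a set \<Rightarrow> ('a \<Rightarrow> 'a \<Rightarrow> bool) \<Rightarrow> nat \<Rightarrow> 'a \<Rightarrow> 'a set pmf" where
  "choice_pmf V E k v =
     (if k \<le> card (nbrs V E v)
      then pmf_of_set {S. S \<subseteq> nbrs V E v \<and> card S = k}
      else return_pmf (nbrs V E v))"

definition choices_pmf :: "'a set \<Rightarrow> ('a \<Rightarrow> 'a \<Rightarrow> bool) \<Rightarrow> nat \<Rightarrow> ('a \<Rightarrow> 'a set) pmf" where
  "choices_pmf V E k = Pi_pmf V {} (choice_pmf V E k)"

definition Gk_edge :: "('a \<Rightarrow> 'a set) \<Rightarrow> 'a \<Rightarrow> 'a \<Rightarrow> bool" where
  "Gk_edge c v w \<longleftrightarrow> w \<in> c v \<or> v \<in> c w"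

definition is_path :: "('a \<Rightarrow> 'a \<Rightarrow> bool) \<Rightarrow> 'a list \<Rightarrow> bool" where
  "is_path F xs \<longleftrightarrow> xs \<noteq> [] \<and> distinct xs \<and> (\<forall>i. Suc i < length xs \<longrightarrow> F (xs ! i) (xs ! Suc i))"

definition has_path_of_length_ge :: "('a \<Rightarrow> 'a \<Rightarrow> bool) \<Rightarrow> real \<Rightarrow> bool" where
  "has_path_of_length_ge F L \<longleftrightarrow> (\<exists>xs. is_path F xs \<and> real (length xs - 1) \<ge> L)"

end

theory Submission
  imports Defs
begin

text \<open>Run a depth-first search in G_k from some vertex, exposing the random choices only as
they are needed; its stack is always a path. Stop once s ~ \<epsilon>m/4 vertices are finished (all their
choices discovered) or the stack is empty. If the stack is then shorter than (1 - \<epsilon>)m, at most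
T = s + (1 - \<epsilon>)m \<le> (1 - \<epsilon>/2)m vertices are discovered and all ks choices of the finished
vertices fall among them. A union bound over the at most 2^(2T) move sequences of the search and
over the discovered vertices bounds this by 2 (4k (1 - \<epsilon>/2)^(k\<epsilon>/4 - 1))^m, which is exponentially
small once k is large. If the stack empties first, the search has exhausted a component of at most
s vertices all of whose choices stay inside it, which has probability at most 1/m.\<close>

lemma binomial_mult_power_le:
  assumes "x \<le> y"
  shows "real (x choose r) * real y ^ r \<le> real (y choose r) * real x ^ r"
proof (induction r)
  case 0 then show ?case by simp
next
  case (Suc r)
  have absorb: "real (Suc r) * real (z choose Suc r) = real (z - r) * real (z choose r)" for z :: nat
  proof (cases "r \<le> z")
    case True
    have "Suc r * (z choose Suc r) = (z - r) * (z choose r)"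
      using binomial_absorb_comp[of z r] binomial_absorption[of r z] by simp
    then show ?thesis by (metis of_nat_mult)
  qed (simp add: binomial_eq_0)
  have step: "real (x - r) * real y \<le> real (y - r) * real x"
  proof (cases "r \<le> x")
    case True
    then show ?thesis using assms by (simp add: of_nat_diff algebra_simps mult_left_mono)
  qed simp
  have "real (Suc r) * (real (x choose Suc r) * real y ^ Suc r)
        = (real (x - r) * real (x choose r)) * real y ^ Suc r"
    by (simp only: absorb mult.assoc[symmetric])
  also have "\<dots> = (real (x choose r) * real y ^ r) * (real (x - r) * real y)"
    by (simp add: algebra_simps)
  also have "\<dots> \<le> (real (y choose r) * real x ^ r) * (real (y - r) * real x)"
    by (intro mult_mono Suc.IH step) auto
  also have "\<dots> = (real (y - r) * real (y choose r)) * real x ^ Suc r"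
    by (simp add: algebra_simps)
  also have "\<dots> = real (Suc r) * (real (y choose Suc r) * real x ^ Suc r)"
    by (simp only: absorb mult.assoc[symmetric])
  finally show ?case by (simp add: mult_le_cancel_left_pos)
qed

lemma binomial_diff_mult_power_le:
  assumes "a \<le> k" "k \<le> d" "a \<le> w" "w \<le> d"
  shows "real (w - a choose (k - a)) * real d ^ k
         \<le> real (d choose k) * real k ^ a * real w ^ (k - a)"
proof -
  \<comment> \<open>\<open>(d choose k)(k choose a) = (d choose a)(d - a choose k - a)\<close>; compare both factors separately.\<close>
  define X where "X = real (w - a choose (k - a))"
  define Y where "Y = real (d - a choose (k - a))"
  define B where "B = real (k choose a)"
  have B_pos: "B > 0" unfolding B_def using assms by simp
  have choose_mult_eq: "real (d choose k) * B = real (d choose a) * Y"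
    unfolding B_def Y_def using choose_mult[of a k d] assms by (metis of_nat_mult)
  have a_part: "B * real d ^ a \<le> real (d choose a) * real k ^ a"
    unfolding B_def using binomial_mult_power_le[of k d a] assms by simp
  have XY_nonneg: "X \<ge> 0" "Y \<ge> 0" unfolding X_def Y_def by auto
  have rest_part: "X * real d ^ (k - a) \<le> Y * real w ^ (k - a)"
  proof (cases "d = a")
    case True then have "k - a = 0" using assms by simp
    then show ?thesis unfolding X_def Y_def by simp
  next
    case False
    then have d_a_pos: "real (d - a) > 0" using assms by simp
    have rest_ratio: "X * real (d - a) ^ (k - a) \<le> Y * real (w - a) ^ (k - a)"
      unfolding X_def Y_def using binomial_mult_power_le[of "w - a" "d - a" "k - a"] assms by simp
    have "real (w - a) * real d \<le> real w * real (d - a)"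
    proof -
      have "real a * real w \<le> real a * real d" using assms by (intro mult_left_mono) auto
      then show ?thesis using assms by (simp add: of_nat_diff algebra_simps)
    qed
    then have factor_le: "(real (w - a) * real d) ^ (k - a) \<le> (real w * real (d - a)) ^ (k - a)"
      by (intro power_mono) auto
    have "(X * real d ^ (k - a)) * real (d - a) ^ (k - a)
          = (X * real (d - a) ^ (k - a)) * real d ^ (k - a)" by (simp add: algebra_simps)
    also have "\<dots> \<le> (Y * real (w - a) ^ (k - a)) * real d ^ (k - a)"
      by (rule mult_right_mono[OF rest_ratio]) simp
    also have "\<dots> = Y * (real (w - a) * real d) ^ (k - a)" by (simp add: power_mult_distrib algebra_simps)
    also have "\<dots> \<le> Y * (real w * real (d - a)) ^ (k - a)"
      by (rule mult_left_mono[OF factor_le XY_nonneg(2)])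
    also have "\<dots> = (Y * real w ^ (k - a)) * real (d - a) ^ (k - a)"
      by (simp add: power_mult_distrib algebra_simps)
    finally show ?thesis using d_a_pos by (simp add: mult_le_cancel_right_pos)
  qed
  have d_power_split: "real d ^ k = real d ^ (k - a) * real d ^ a"
    using assms by (simp add: power_add[symmetric])
  have "(X * real d ^ k) * B = (X * real d ^ (k - a)) * (B * real d ^ a)"
    by (simp add: d_power_split algebra_simps)
  also have "\<dots> \<le> (Y * real w ^ (k - a)) * (real (d choose a) * real k ^ a)"
    by (rule mult_mono[OF rest_part a_part]) (use XY_nonneg B_pos in auto)
  also have "\<dots> = (real (d choose k) * real k ^ a * real w ^ (k - a)) * B"
    using choose_mult_eq by (simp add: algebra_simps)
  finally show ?thesis unfolding X_def using B_pos by (simp add: mult_le_cancel_right_pos)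
qed

lemma card_k_subsets_between:
  assumes N: "finite N" and A: "A \<subseteq> X \<inter> N" and k: "card A \<le> k"
  shows "card {S. S \<subseteq> N \<and> card S = k \<and> A \<subseteq> S \<and> S \<subseteq> X} = (card (X \<inter> N) - card A) choose (k - card A)"
proof -
  have fA: "finite A" and fW: "finite (X \<inter> N)" using A N finite_subset by auto
  have eq: "{S. S \<subseteq> N \<and> card S = k \<and> A \<subseteq> S \<and> S \<subseteq> X}
      = (\<lambda>T. T \<union> A) ` {T. T \<subseteq> X \<inter> N - A \<and> card T = k - card A}"
  proof (intro equalityI subsetI)
    fix S assume "S \<in> {S. S \<subseteq> N \<and> card S = k \<and> A \<subseteq> S \<and> S \<subseteq> X}"
    then have S: "S \<subseteq> N" "card S = k" "A \<subseteq> S" "S \<subseteq> X" by auto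
    then have "card (S - A) = k - card A" using N finite_subset by (metis card_Diff_subset fA)
    moreover have "S - A \<subseteq> X \<inter> N - A" "S = (S - A) \<union> A" using S by auto
    ultimately show "S \<in> (\<lambda>T. T \<union> A) ` {T. T \<subseteq> X \<inter> N - A \<and> card T = k - card A}" by blast
  next
    fix S assume "S \<in> (\<lambda>T. T \<union> A) ` {T. T \<subseteq> X \<inter> N - A \<and> card T = k - card A}"
    then obtain T where T: "T \<subseteq> X \<inter> N - A" "card T = k - card A" "S = T \<union> A" by auto
    have "card S = k"
      using T k fA finite_subset[OF T(1)] fW by (subst T(3), subst card_Un_disjoint) auto
    then show "S \<in> {S. S \<subseteq> N \<and> card S = k \<and> A \<subseteq> S \<and> S \<subseteq> X}" using T A by auto
  qed
  have "inj_on (\<lambda>T. T \<union> A) {T. T \<subseteq> X \<inter> N - A \<and> card T = k - card A}"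
    by (rule inj_onI) auto
  then show ?thesis
    unfolding eq using n_subsets[of "X \<inter> N - A" "k - card A"] fW fA A
    by (simp add: card_image card_Diff_subset)
qed

lemma prob_k_subset_between_le:
  assumes N: "finite N" and kN: "k \<le> card N"
  shows "measure_pmf.prob (pmf_of_set {S. S \<subseteq> N \<and> card S = k}) {S. A \<subseteq> S \<and> S \<subseteq> X}
         \<le> (real k / real (card N)) ^ card A * (real (card (X \<inter> N)) / real (card N)) ^ (k - card A)"
proof -
  define \<Omega> where "\<Omega> = {S. S \<subseteq> N \<and> card S = k}"
  define d where "d = card N"
  have card\<Omega>: "card \<Omega> = d choose k" unfolding \<Omega>_def d_def using n_subsets[OF N] by simp
  have "finite \<Omega>" using N unfolding \<Omega>_def by simp
  moreover have "\<Omega> \<noteq> {}" using obtain_subset_with_card_n[OF kN] unfolding \<Omega>_def by blast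
  ultimately have prob: "measure_pmf.prob (pmf_of_set \<Omega>) {S. A \<subseteq> S \<and> S \<subseteq> X}
      = real (card {S. S \<subseteq> N \<and> card S = k \<and> A \<subseteq> S \<and> S \<subseteq> X}) / real (d choose k)"
    by (simp add: measure_pmf_of_set card\<Omega>[symmetric] \<Omega>_def Int_def conj_ac)
  show ?thesis
  proof (cases "A \<subseteq> X \<inter> N \<and> card A \<le> k")
    case False
    have "{S. S \<subseteq> N \<and> card S = k \<and> A \<subseteq> S \<and> S \<subseteq> X} = {}"
      using False N by (auto dest: card_mono[OF finite_subset])
    then show ?thesis using prob unfolding \<Omega>_def by (simp only: card.empty) simp
  next
    case True
    have aw: "card A \<le> card (X \<inter> N)" and wd: "card (X \<inter> N) \<le> d"
      using True N unfolding d_def by (auto intro: card_mono)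
    have "real ((card (X \<inter> N) - card A) choose (k - card A)) * real d ^ k
         \<le> real (d choose k) * real k ^ card A * real (card (X \<inter> N)) ^ (k - card A)"
      by (rule binomial_diff_mult_power_le) (use True kN aw wd d_def in auto)
    moreover have "real (d choose k) > 0" using kN d_def by simp
    ultimately have "real ((card (X \<inter> N) - card A) choose (k - card A)) / real (d choose k)
        \<le> real k ^ card A * real (card (X \<inter> N)) ^ (k - card A) / real d ^ k"
      using kN d_def by (cases "d = 0") (auto simp: field_simps)
    also have "\<dots> = (real k / real d) ^ card A * (real (card (X \<inter> N)) / real d) ^ (k - card A)"
      using True by (simp add: power_divide power_add[symmetric])
    finally show ?thesis
      using prob card_k_subsets_between[OF N] True unfolding \<Omega>_def d_def by simp
  qed
qed

definition tree_embeddings :: "'a set \<Rightarrow> ('a \<Rightarrow> 'a set) \<Rightarrow> 'a \<Rightarrow> (nat \<Rightarrow> nat) \<Rightarrow> nat \<Rightarrow> 'a list set" where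
  "tree_embeddings V N v0 par n = {xs. set xs \<subseteq> V \<and> length xs = n \<and> xs ! 0 = v0 \<and>
       (\<forall>i\<in>{1..<n}. xs ! i \<in> N (xs ! par i))}"

lemma finite_tree_embeddings: "finite V \<Longrightarrow> finite (tree_embeddings V N v0 par n)"
  unfolding tree_embeddings_def
  by (rule finite_subset[OF _ finite_lists_length_eq[of V n]]) auto

lemma tree_embeddings_1: "v0 \<in> V \<Longrightarrow> tree_embeddings V N v0 par 1 = {[v0]}"
  unfolding tree_embeddings_def by (auto simp: length_Suc_conv)

lemma snoc_in_tree_embeddings_iff:
  assumes n: "1 \<le> n" and par: "par n < n" and NV: "\<And>y. y \<in> V \<Longrightarrow> N y \<subseteq> V"
    and par_lt: "\<And>i. 1 \<le> i \<Longrightarrow> i < n \<Longrightarrow> par i < i"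
  shows "xs @ [x] \<in> tree_embeddings V N v0 par (Suc n)
     \<longleftrightarrow> xs \<in> tree_embeddings V N v0 par n \<and> x \<in> N (xs ! par n)"
proof (cases "length xs = n")
  case True
  have lt: "par i < n" if "i \<in> {1..<n}" for i using that par_lt[of i] by auto
  have "{1..<Suc n} = insert n {1..<n}" using n by auto
  then have "(\<forall>i\<in>{1..<Suc n}. (xs @ [x]) ! i \<in> N ((xs @ [x]) ! par i))
      \<longleftrightarrow> (\<forall>i\<in>{1..<n}. xs ! i \<in> N (xs ! par i)) \<and> x \<in> N (xs ! par n)"
    using True lt par by (auto simp: nth_append)
  moreover have "xs ! par n \<in> V" if "set xs \<subseteq> V" using that par True by auto
  ultimately show ?thesis
    using True n NV unfolding tree_embeddings_def by (auto simp: nth_append)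
qed (auto simp: tree_embeddings_def)

lemma tree_embeddings_Suc:
  assumes n: "1 \<le> n" and par: "\<And>i. 1 \<le> i \<Longrightarrow> i \<le> n \<Longrightarrow> par i < i"
    and NV: "\<And>y. y \<in> V \<Longrightarrow> N y \<subseteq> V"
  shows "tree_embeddings V N v0 par (Suc n)
       = (\<lambda>(xs, x). xs @ [x]) ` Sigma (tree_embeddings V N v0 par n) (\<lambda>xs. N (xs ! par n))"
proof -
  have snoc_iff: "xs @ [x] \<in> tree_embeddings V N v0 par (Suc n)
      \<longleftrightarrow> xs \<in> tree_embeddings V N v0 par n \<and> x \<in> N (xs ! par n)" for xs x
    by (rule snoc_in_tree_embeddings_iff) (use n par NV in auto)
  show ?thesis
  proof (intro equalityI subsetI)
  fix ys assume ys: "ys \<in> tree_embeddings V N v0 par (Suc n)"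
  then have "ys \<noteq> []" unfolding tree_embeddings_def by auto
  then have ys_eq: "butlast ys @ [last ys] = ys" by simp
  then have "(butlast ys, last ys) \<in> Sigma (tree_embeddings V N v0 par n) (\<lambda>xs. N (xs ! par n))"
    using ys snoc_iff[of "butlast ys" "last ys"] by simp
  then show "ys \<in> (\<lambda>(xs, x). xs @ [x]) ` Sigma (tree_embeddings V N v0 par n) (\<lambda>xs. N (xs ! par n))"
    using ys_eq by (intro image_eqI[where x = "(butlast ys, last ys)"]) auto
  qed (use snoc_iff in auto)
qed

lemma prod_parent_snoc:
  assumes "length xs = n" "1 \<le> n" and par: "\<And>i. 1 \<le> i \<Longrightarrow> i \<le> n \<Longrightarrow> par i < i"
  shows "(\<Prod>i\<in>{1..<Suc n}. f ((xs @ [x]) ! par i)) = (\<Prod>i\<in>{1..<n}. f (xs ! par i)) * f (xs ! par n)"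
proof -
  have "(\<Prod>i\<in>{1..<Suc n}. f ((xs @ [x]) ! par i)) = (\<Prod>i\<in>{1..<Suc n}. f (xs ! par i))"
    using assms by (intro prod.cong refl) (auto simp: nth_append less_Suc_eq_le intro: less_le_trans)
  then show ?thesis using assms(2) by (simp add: prod.atLeastLessThan_Suc)
qed

lemma sum_prod_tree_embeddings_le:
  assumes fin: "finite V" and v0: "v0 \<in> V"
    and par: "\<And>i. 1 \<le> i \<Longrightarrow> i < n \<Longrightarrow> par i < i"
    and NV: "\<And>y. y \<in> V \<Longrightarrow> N y \<subseteq> V \<and> finite (N y)"
    and fK: "\<And>y. y \<in> V \<Longrightarrow> f y * real (card (N y)) \<le> K"
    and f0: "\<And>y. f y \<ge> 0"
    and n: "n \<ge> 1"
  shows "(\<Sum>xs\<in>tree_embeddings V N v0 par n. \<Prod>i\<in>{1..<n}. f (xs ! par i)) \<le> K ^ (n - 1)"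
  using n par
proof (induction n rule: nat_induct_at_least)
  case base
  then show ?case using tree_embeddings_1[OF v0] by simp
next
  case (Suc n)
  define A where "A = tree_embeddings V N v0 par n"
  define w where "w xs = (\<Prod>i\<in>{1..<n}. f (xs ! par i))" for xs
  have par_n: "\<And>i. 1 \<le> i \<Longrightarrow> i \<le> n \<Longrightarrow> par i < i" using Suc.prems by auto
  have A: "length xs = n" "xs ! par n \<in> V" if "xs \<in> A" for xs
    using that par_n[of n] Suc.hyps unfolding A_def tree_embeddings_def by auto
  have inj: "inj_on (\<lambda>(xs, x). xs @ [x]) (Sigma A (\<lambda>xs. N (xs ! par n)))" by (rule inj_onI) auto
  have emb: "tree_embeddings V N v0 par (Suc n) = (\<lambda>(xs, x). xs @ [x]) ` Sigma A (\<lambda>xs. N (xs ! par n))"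
    unfolding A_def by (rule tree_embeddings_Suc) (use Suc.hyps par_n NV in auto)
  have "(\<Sum>ys\<in>tree_embeddings V N v0 par (Suc n). \<Prod>i\<in>{1..<Suc n}. f (ys ! par i))
      = (\<Sum>p\<in>Sigma A (\<lambda>xs. N (xs ! par n)). \<Prod>i\<in>{1..<Suc n}. f ((fst p @ [snd p]) ! par i))"
    by (simp only: emb sum.reindex[OF inj] comp_def case_prod_beta)
  also have "\<dots> = (\<Sum>xs\<in>A. \<Sum>x\<in>N (xs ! par n). \<Prod>i\<in>{1..<Suc n}. f ((xs @ [x]) ! par i))"
    using finite_tree_embeddings[OF fin] NV A(2) unfolding A_def
    by (subst sum.Sigma) (auto simp: case_prod_beta)
  also have "\<dots> = (\<Sum>xs\<in>A. w xs * (f (xs ! par n) * real (card (N (xs ! par n)))))"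
  proof (intro sum.cong refl)
    fix xs assume "xs \<in> A"
    then have "(\<Prod>i\<in>{1..<Suc n}. f ((xs @ [x]) ! par i)) = w xs * f (xs ! par n)" for x
      using prod_parent_snoc[OF A(1) Suc.hyps par_n] unfolding w_def by blast
    then show "(\<Sum>x\<in>N (xs ! par n). \<Prod>i\<in>{1..<Suc n}. f ((xs @ [x]) ! par i))
        = w xs * (f (xs ! par n) * real (card (N (xs ! par n))))"
      by (simp only: sum_constant) (simp add: mult_ac)
  qed
  also have "\<dots> \<le> (\<Sum>xs\<in>A. w xs * K)"
    unfolding w_def by (intro sum_mono mult_left_mono fK A(2)) (auto intro: prod_nonneg f0)
  also have "\<dots> = K * (\<Sum>xs\<in>A. w xs)" by (simp add: sum_distrib_left mult.commute)
  also have "\<dots> \<le> K * K ^ (n - 1)"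
  proof (rule mult_left_mono)
    show "(\<Sum>xs\<in>A. w xs) \<le> K ^ (n - 1)" using Suc.IH Suc.prems unfolding A_def w_def by auto
    show "0 \<le> K" using fK[OF v0] f0[of v0] by (meson order.trans zero_le_mult_iff of_nat_0_le_iff)
  qed
  also have "\<dots> = K ^ (Suc n - 1)" using Suc.hyps by (cases n) auto
  finally show ?case .
qed

text \<open>Depth-first search is recorded on the level of indices: the i-th discovered vertex gets
index i, and a run is determined by its word of moves, where True discovers a new vertex as a child
of the top of the stack and False finishes the top of the stack. The actual vertices enter only
through a list whose i-th entry is the vertex with index i (see dfs_labels). The union bound below
ranges over the words, of which there are only exponentially many.\<close>

record dfs_state =
  stack :: "nat list"
  discovered :: nat
  finished :: "nat set"
  parent :: "nat \<Rightarrow> nat"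

definition dfs_step :: "dfs_state \<Rightarrow> bool \<Rightarrow> dfs_state" where
  "dfs_step st b =
     (if b then st\<lparr>stack := discovered st # stack st, discovered := Suc (discovered st),
                   parent := (parent st)(discovered st := hd (stack st))\<rparr>
      else st\<lparr>stack := tl (stack st), finished := insert (hd (stack st)) (finished st)\<rparr>)"

definition dfs_run :: "bool list \<Rightarrow> dfs_state" where
  "dfs_run \<omega> = foldl dfs_step \<lparr>stack = [0], discovered = 1, finished = {}, parent = \<lambda>_. 0\<rparr> \<omega>"

lemma dfs_run_Nil [simp]:
  "stack (dfs_run []) = [0]" "discovered (dfs_run []) = 1" "finished (dfs_run []) = {}"
  by (simp_all add: dfs_run_def)

lemma dfs_run_push [simp]:
  "stack (dfs_run (\<omega> @ [True])) = discovered (dfs_run \<omega>) # stack (dfs_run \<omega>)"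
  "discovered (dfs_run (\<omega> @ [True])) = Suc (discovered (dfs_run \<omega>))"
  "finished (dfs_run (\<omega> @ [True])) = finished (dfs_run \<omega>)"
  "parent (dfs_run (\<omega> @ [True])) = (parent (dfs_run \<omega>))(discovered (dfs_run \<omega>) := hd (stack (dfs_run \<omega>)))"
  by (simp_all add: dfs_run_def dfs_step_def)

lemma dfs_run_pop [simp]:
  "stack (dfs_run (\<omega> @ [False])) = tl (stack (dfs_run \<omega>))"
  "discovered (dfs_run (\<omega> @ [False])) = discovered (dfs_run \<omega>)"
  "finished (dfs_run (\<omega> @ [False])) = insert (hd (stack (dfs_run \<omega>))) (finished (dfs_run \<omega>))"
  "parent (dfs_run (\<omega> @ [False])) = parent (dfs_run \<omega>)"
  by (simp_all add: dfs_run_def dfs_step_def)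

definition dfs_wf :: "bool list \<Rightarrow> bool" where
  "dfs_wf \<omega> \<longleftrightarrow> (let st = dfs_run \<omega> in
     (\<forall>i\<in>{1..<discovered st}. parent st i < i) \<and>
     finished st \<inter> set (stack st) = {} \<and> finished st \<union> set (stack st) = {..<discovered st} \<and>
     distinct (stack st) \<and> (\<forall>j. Suc j < length (stack st) \<longrightarrow> parent st (stack st ! j) = stack st ! Suc j) \<and>
     (stack st \<noteq> [] \<longrightarrow> last (stack st) = 0) \<and>
     length \<omega> + 1 = discovered st + card (finished st))"

lemma dfs_wf_Nil: "dfs_wf []"
  by (auto simp: dfs_wf_def)

lemma dfs_wf_finite_finished: "dfs_wf \<omega> \<Longrightarrow> finite (finished (dfs_run \<omega>))"
  unfolding dfs_wf_def Let_def by (metis finite_Un finite_lessThan)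

lemma dfs_wf_discovered_pos: "dfs_wf \<omega> \<Longrightarrow> 1 \<le> discovered (dfs_run \<omega>)"
  unfolding dfs_wf_def Let_def by (cases "discovered (dfs_run \<omega>)") auto

lemma dfs_wf_discovered_eq:
  assumes "dfs_wf \<omega>"
  shows "discovered (dfs_run \<omega>) = card (finished (dfs_run \<omega>)) + length (stack (dfs_run \<omega>))"
proof -
  let ?st = "dfs_run \<omega>"
  have "card {..<discovered ?st} = card (finished ?st \<union> set (stack ?st))"
    using assms unfolding dfs_wf_def Let_def by simp
  also have "\<dots> = card (finished ?st) + card (set (stack ?st))"
    using assms dfs_wf_finite_finished[OF assms] unfolding dfs_wf_def Let_def
    by (intro card_Un_disjoint) auto
  also have "\<dots> = card (finished ?st) + length (stack ?st)"
    using assms unfolding dfs_wf_def Let_def by (simp add: distinct_card)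
  finally show ?thesis by simp
qed

lemma dfs_wf_push:
  assumes wf: "dfs_wf \<omega>" and ne: "stack (dfs_run \<omega>) \<noteq> []"
  shows "dfs_wf (\<omega> @ [True])"
proof -
  define stk n P par where "stk = stack (dfs_run \<omega>)" "n = discovered (dfs_run \<omega>)"
    "P = finished (dfs_run \<omega>)" "par = parent (dfs_run \<omega>)"
  have I: "\<forall>i\<in>{1..<n}. par i < i" "P \<inter> set stk = {}" "P \<union> set stk = {..<n}" "distinct stk"
      "\<forall>j. Suc j < length stk \<longrightarrow> par (stk ! j) = stk ! Suc j" "last stk = 0"
      "length \<omega> + 1 = n + card P"
    using wf ne unfolding dfs_wf_def Let_def stk_n_P_par_def by auto
  have ne_stk: "stk \<noteq> []" using ne unfolding stk_n_P_par_def .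
  then have "hd stk \<in> set stk" by simp
  then have hd_lt: "hd stk < n" using I(3) by (metis UnI2 lessThan_iff)
  have "n \<notin> P \<union> set stk" using I(3) by simp
  then have n_notin: "n \<notin> P" "n \<notin> set stk" by auto
  show ?thesis
    unfolding dfs_wf_def Let_def dfs_run_push stk_n_P_par_def[symmetric]
  proof (intro conjI ballI allI impI)
    fix i assume "i \<in> {1..<Suc n}"
    then show "(par(n := hd stk)) i < i" using I(1) hd_lt by (cases "i = n") auto
  next
    fix j assume j: "Suc j < length (n # stk)"
    show "(par(n := hd stk)) ((n # stk) ! j) = (n # stk) ! Suc j"
    proof (cases j)
      case 0 then show ?thesis using ne_stk by (simp add: hd_conv_nth)
    next
      case (Suc j')
      then have "stk ! j' \<in> set stk" using j by simp
      then show ?thesis using I(5) Suc j n_notin by auto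
    qed
  next
    show "P \<union> set (n # stk) = {..<Suc n}" using I(3) by (auto simp: lessThan_Suc)
  qed (use I n_notin ne_stk in auto)
qed

lemma dfs_wf_pop:
  assumes wf: "dfs_wf \<omega>" and ne: "stack (dfs_run \<omega>) \<noteq> []"
  shows "dfs_wf (\<omega> @ [False])"
proof -
  define stk n P par where "stk = stack (dfs_run \<omega>)" "n = discovered (dfs_run \<omega>)"
    "P = finished (dfs_run \<omega>)" "par = parent (dfs_run \<omega>)"
  have I: "P \<inter> set stk = {}" "P \<union> set stk = {..<n}" "distinct stk"
      "\<forall>j. Suc j < length stk \<longrightarrow> par (stk ! j) = stk ! Suc j" "last stk = 0"
      "length \<omega> + 1 = n + card P"
    using wf ne unfolding dfs_wf_def Let_def stk_n_P_par_def by auto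
  have stk_eq: "stk = hd stk # tl stk" using ne unfolding stk_n_P_par_def by simp
  have finP: "finite P" using dfs_wf_finite_finished[OF wf] unfolding stk_n_P_par_def by simp
  have hd_notin: "hd stk \<notin> P" "hd stk \<notin> set (tl stk)"
    using I(1,3) stk_eq by (metis disjoint_iff list.set_intros(1), metis distinct.simps(2))
  have set_stk: "set stk = insert (hd stk) (set (tl stk))" using stk_eq by (metis list.simps(15))
  show ?thesis
    unfolding dfs_wf_def Let_def dfs_run_pop stk_n_P_par_def[symmetric]
  proof (intro conjI allI impI)
    show "\<forall>i\<in>{1..<n}. par i < i" using wf unfolding dfs_wf_def Let_def stk_n_P_par_def by simp
    show "insert (hd stk) P \<inter> set (tl stk) = {}" using I(1) hd_notin set_stk by auto
    show "insert (hd stk) P \<union> set (tl stk) = {..<n}" using I(2) set_stk by auto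
    show "distinct (tl stk)" using I(3) by (simp add: distinct_tl)
    show "length (\<omega> @ [False]) + 1 = n + card (insert (hd stk) P)" using I(6) finP hd_notin by simp
  next
    fix j assume "Suc j < length (tl stk)"
    then show "par (tl stk ! j) = tl stk ! Suc j" using I(4) by (simp add: nth_tl)
  next
    assume "tl stk \<noteq> []"
    then show "last (tl stk) = 0" using I(5) stk_eq by (metis last_ConsR)
  qed
qed

definition dfs_labels :: "'a set \<Rightarrow> ('a \<Rightarrow> 'a set) \<Rightarrow> 'a \<Rightarrow> bool list \<Rightarrow> 'a list \<Rightarrow> bool" where
  "dfs_labels V c v0 \<omega> xs \<longleftrightarrow> (let st = dfs_run \<omega> in
     length xs = discovered st \<and> xs ! 0 = v0 \<and> distinct xs \<and> set xs \<subseteq> V \<and>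
     (\<forall>i\<in>{1..<discovered st}. xs ! i \<in> c (xs ! parent st i)) \<and>
     (\<forall>j\<in>finished st. c (xs ! j) \<subseteq> set xs))"

lemma dfs_labels_Nil: "v0 \<in> V \<Longrightarrow> dfs_labels V c v0 [] [v0]"
  by (simp add: dfs_labels_def)

lemma dfs_wf_stack_lt:
  "dfs_wf \<omega> \<Longrightarrow> i \<in> set (stack (dfs_run \<omega>)) \<Longrightarrow> i < discovered (dfs_run \<omega>)"
  unfolding dfs_wf_def Let_def by auto

lemma dfs_labels_push:
  assumes lab: "dfs_labels V c v0 \<omega> xs" and wf: "dfs_wf \<omega>" and ne: "stack (dfs_run \<omega>) \<noteq> []"
    and w: "w \<in> c (xs ! hd (stack (dfs_run \<omega>)))" "w \<notin> set xs" "w \<in> V"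
  shows "dfs_labels V c v0 (\<omega> @ [True]) (xs @ [w])"
proof -
  define n par where "n = discovered (dfs_run \<omega>)" "par = parent (dfs_run \<omega>)"
  have L: "length xs = n" "xs ! 0 = v0" "distinct xs" "set xs \<subseteq> V"
      "\<forall>i\<in>{1..<n}. xs ! i \<in> c (xs ! par i)" "\<forall>j\<in>finished (dfs_run \<omega>). c (xs ! j) \<subseteq> set xs"
    using lab unfolding dfs_labels_def Let_def n_par_def by auto
  have hd_lt: "hd (stack (dfs_run \<omega>)) < n"
    using dfs_wf_stack_lt[OF wf] ne unfolding n_par_def by simp
  then have n_pos: "0 < n" by simp
  have par_lt: "par i < i" if "i \<in> {1..<n}" for i
    using wf that unfolding dfs_wf_def Let_def n_par_def by auto
  have fin_lt: "j < n" if "j \<in> finished (dfs_run \<omega>)" for j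
    using wf that unfolding dfs_wf_def Let_def n_par_def by auto
  have "(xs @ [w]) ! i \<in> c ((xs @ [w]) ! (par(n := hd (stack (dfs_run \<omega>)))) i)"
    if "i \<in> {1..<Suc n}" for i
  proof (cases "i = n")
    case True then show ?thesis using w(1) hd_lt L(1) by (simp add: nth_append)
  next
    case False
    then have "i \<in> {1..<n}" using that by auto
    then show ?thesis using L(1,5) par_lt[of i] by (auto simp: nth_append)
  qed
  then show ?thesis
    using L w fin_lt n_pos unfolding dfs_labels_def Let_def dfs_run_push n_par_def[symmetric]
    by (auto simp: nth_append)
qed

lemma dfs_labels_pop:
  assumes "dfs_labels V c v0 \<omega> xs" and "c (xs ! hd (stack (dfs_run \<omega>))) \<subseteq> set xs"
  shows "dfs_labels V c v0 (\<omega> @ [False]) xs"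
  using assms unfolding dfs_labels_def Let_def dfs_run_pop by auto

lemma dfs_stack_is_path:
  assumes wf: "dfs_wf \<omega>" and lab: "dfs_labels V c v0 \<omega> xs" and ne: "stack (dfs_run \<omega>) \<noteq> []"
  shows "is_path (Gk_edge c) (map ((!) xs) (stack (dfs_run \<omega>)))"
proof -
  define stk n par where "stk = stack (dfs_run \<omega>)" "n = discovered (dfs_run \<omega>)" "par = parent (dfs_run \<omega>)"
  have W: "distinct stk" "\<forall>j. Suc j < length stk \<longrightarrow> par (stk ! j) = stk ! Suc j"
      "last stk = 0" "\<forall>i\<in>set stk. i < n"
    using wf ne unfolding dfs_wf_def Let_def stk_n_par_def by auto
  have L: "length xs = n" "distinct xs" "\<forall>i\<in>{1..<n}. xs ! i \<in> c (xs ! par i)"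
    using lab unfolding dfs_labels_def Let_def stk_n_par_def by auto
  have "inj_on ((!) xs) (set stk)" using L W(4) by (simp add: inj_on_def nth_eq_iff_index_eq)
  then have dist: "distinct (map ((!) xs) stk)" using W(1) by (simp add: distinct_map)
  have "Gk_edge c (xs ! (stk ! j)) (xs ! (stk ! Suc j))" if j: "Suc j < length stk" for j
  proof -
    have "stk ! j \<noteq> stk ! (length stk - 1)" using W(1) j by (simp add: nth_eq_iff_index_eq)
    then have "stk ! j \<noteq> 0" using W(3) ne by (simp add: last_conv_nth stk_n_par_def)
    moreover have "stk ! j < n" using W(4) j by simp
    ultimately have "xs ! (stk ! j) \<in> c (xs ! par (stk ! j))" using L(3) by simp
    then show ?thesis using W(2) j by (simp add: Gk_edge_def)
  qed
  then show ?thesis using dist ne unfolding is_path_def stk_n_par_def by simp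
qed

lemma dfs_run_until:
  assumes wf: "dfs_wf \<omega>" and lab: "dfs_labels V c v0 \<omega> xs" and V: "finite V"
    and cV: "\<And>y. y \<in> V \<Longrightarrow> c y \<subseteq> V"
    and lt: "card (finished (dfs_run \<omega>)) < s" and ne: "stack (dfs_run \<omega>) \<noteq> []"
  shows "\<exists>\<omega>' xs'. dfs_wf \<omega>' \<and> dfs_labels V c v0 \<omega>' xs' \<and> card (finished (dfs_run \<omega>')) \<le> s \<and>
           (stack (dfs_run \<omega>') = [] \<or> card (finished (dfs_run \<omega>')) = s)"
  using wf lab lt ne
proof (induction "2 * card V - length \<omega>" arbitrary: \<omega> xs rule: less_induct)
  case less
  let ?st = "dfs_run \<omega>"
  have L: "length xs = discovered ?st" "distinct xs" "set xs \<subseteq> V"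
    using less.prems(2) unfolding dfs_labels_def Let_def by auto
  have "discovered ?st \<le> card V" using L V by (metis card_mono distinct_card)
  moreover have "length \<omega> + 1 = discovered ?st + card (finished ?st)"
    using less.prems(1) unfolding dfs_wf_def Let_def by simp
  moreover note dfs_wf_discovered_eq[OF less.prems(1)]
  ultimately have shorter: "2 * card V - length (\<omega> @ [b]) < 2 * card V - length \<omega>" for b
    by simp
  define y where "y = xs ! hd (stack ?st)"
  have hd_fin: "hd (stack ?st) \<notin> finished ?st"
    using less.prems(1,4) unfolding dfs_wf_def Let_def by auto
  show ?case
  proof (cases "c y \<subseteq> set xs")
    case True
    let ?\<omega> = "\<omega> @ [False]"
    have step: "dfs_wf ?\<omega>" "dfs_labels V c v0 ?\<omega> xs"
      using dfs_wf_pop[OF less.prems(1,4)] dfs_labels_pop[OF less.prems(2)] True y_def by auto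
    have card: "card (finished (dfs_run ?\<omega>)) = Suc (card (finished ?st))"
      using hd_fin dfs_wf_finite_finished[OF less.prems(1)] by simp
    show ?thesis
    proof (cases "stack (dfs_run ?\<omega>) = [] \<or> card (finished (dfs_run ?\<omega>)) = s")
      case True then show ?thesis using step card less.prems(3) by (intro exI[of _ ?\<omega>] exI[of _ xs]) auto
    next
      case False
      then show ?thesis using less.hyps[OF shorter step] card less.prems(3) by auto
    qed
  next
    case False
    then obtain w where w: "w \<in> c y" "w \<notin> set xs" by auto
    have "hd (stack ?st) < discovered ?st" using dfs_wf_stack_lt[OF less.prems(1)] less.prems(4) by simp
    then have "y \<in> V" using L y_def by auto
    then have "dfs_labels V c v0 (\<omega> @ [True]) (xs @ [w])"
      using dfs_labels_push[OF less.prems(2,1,4)] w cV y_def by auto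
    then show ?thesis
      using less.hyps[OF shorter dfs_wf_push[OF less.prems(1,4)]] less.prems(3) by auto
  qed
qed

lemma prod_power_diff_card_fibres_le:
  fixes q :: real
  assumes "finite I" "finite Y" "0 \<le> q" "q \<le> 1"
  shows "(\<Prod>y\<in>Y. q ^ (k - card {i\<in>I. h i = y})) \<le> q ^ (k * card Y - card I)"
proof -
  have "(\<Sum>y\<in>Y. card {i\<in>I. h i = y}) = card (\<Union>y\<in>Y. {i\<in>I. h i = y})"
    using assms by (intro card_UN_disjoint[symmetric]) auto
  also have "\<dots> \<le> card I" using assms(1) by (intro card_mono) auto
  finally have "(\<Sum>y\<in>Y. card {i\<in>I. h i = y}) \<le> card I" .
  moreover have "k * card Y = (\<Sum>y\<in>Y. k)" by simp
  moreover have "\<dots> \<le> (\<Sum>y\<in>Y. (k - card {i\<in>I. h i = y}) + card {i\<in>I. h i = y})"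
    by (intro sum_mono) auto
  ultimately have "k * card Y - card I \<le> (\<Sum>y\<in>Y. k - card {i\<in>I. h i = y})"
    unfolding sum.distrib by linarith
  then show ?thesis using assms(3,4) by (simp add: power_sum[symmetric] power_decreasing)
qed

lemma prod_power_card_fibres:
  assumes "finite Y" "finite I" "h ` I \<subseteq> Y"
  shows "(\<Prod>y\<in>Y. f y ^ card {i\<in>I. h i = y}) = (\<Prod>i\<in>I. f (h i))"
  using prod.group[OF assms(2,1,3), of "\<lambda>i. f (h i)"] by simp

text \<open>A product event over the vertices, so that its probability factorises: every vertex chose
its children in the search tree, and every finished vertex chose only discovered vertices.\<close>

definition dfs_event :: "'a set \<Rightarrow> bool list \<Rightarrow> 'a list \<Rightarrow> ('a \<Rightarrow> 'a set) set" where
  "dfs_event V \<omega> xs = Pi V (\<lambda>y. {S.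
     {xs ! i |i. i \<in> {1..<discovered (dfs_run \<omega>)} \<and> xs ! parent (dfs_run \<omega>) i = y} \<subseteq> S \<and>
     (y \<in> (!) xs ` finished (dfs_run \<omega>) \<longrightarrow> S \<subseteq> set xs)})"

lemma dfs_labels_in_dfs_event: "dfs_labels V c v0 \<omega> xs \<Longrightarrow> c \<in> dfs_event V \<omega> xs"
  unfolding dfs_labels_def dfs_event_def Let_def by blast

text \<open>The two ways a search stopped after s finished vertices can fail to exhibit a long path,
and the bound on the probability of following a given word (sum_prob_dfs_event_le): each of the
n - 1 tree edges contributes a factor k, and each further choice of a finished vertex must hit one of
the n discovered vertices among at least m neighbours.\<close>

definition short_stack_words :: "nat \<Rightarrow> nat \<Rightarrow> bool list set" where
  "short_stack_words s T = {\<omega>. dfs_wf \<omega> \<and> stack (dfs_run \<omega>) \<noteq> [] \<and> card (finished (dfs_run \<omega>)) = s \<and>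
     discovered (dfs_run \<omega>) \<le> T \<and> length \<omega> \<le> 2 * T}"

definition exhausted_words :: "nat \<Rightarrow> bool list set" where
  "exhausted_words s = {\<omega>. dfs_wf \<omega> \<and> stack (dfs_run \<omega>) = [] \<and> discovered (dfs_run \<omega>) \<le> s}"

definition dfs_weight :: "nat \<Rightarrow> nat \<Rightarrow> bool list \<Rightarrow> real" where
  "dfs_weight k m \<omega> = (let n = discovered (dfs_run \<omega>) in
     real k ^ (n - 1) * (real n / real m) ^ (k * card (finished (dfs_run \<omega>)) - (n - 1)))"

lemma card_bool_lists_le: "card {\<omega>::bool list. length \<omega> \<le> L} \<le> 2 ^ Suc L"
proof -
  have "card {\<omega>::bool list. length \<omega> \<le> L} = (\<Sum>i\<le>L. 2 ^ i)"
    using card_lists_length_le[of "UNIV :: bool set" L] by simp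
  also have "\<dots> \<le> (2::nat) ^ Suc L" by (induction L) auto
  finally show ?thesis .
qed

lemma exhausted_words_length:
  assumes "\<omega> \<in> exhausted_words s"
  shows "length \<omega> = 2 * discovered (dfs_run \<omega>) - 1" "card (finished (dfs_run \<omega>)) = discovered (dfs_run \<omega>)"
  using assms dfs_wf_discovered_eq[of \<omega>] unfolding exhausted_words_def dfs_wf_def Let_def by auto

lemma finite_exhausted_words: "finite (exhausted_words s)"
proof (rule finite_subset)
  show "exhausted_words s \<subseteq> {\<omega>. length \<omega> \<le> 2 * s}"
    using exhausted_words_length(1) by (force simp: exhausted_words_def)
qed (simp add: finite_lists_length_le[of "UNIV :: bool set", simplified])

lemma finite_short_stack_words: "finite (short_stack_words s T)"
  by (rule finite_subset[of _ "{\<omega>. length \<omega> \<le> 2 * T}"])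
    (auto simp: short_stack_words_def finite_lists_length_le[of "UNIV :: bool set", simplified])

lemma sum_dfs_weight_short_stack_words_le:
  assumes k: "1 \<le> k" and T: "T \<le> m"
  shows "(\<Sum>\<omega>\<in>short_stack_words s T. dfs_weight k m \<omega>) \<le> 2 ^ Suc (2 * T) * real k ^ T * (real T / real m) ^ (k * s - T)"
proof -
  have "dfs_weight k m \<omega> \<le> real k ^ T * (real T / real m) ^ (k * s - T)"
    if "\<omega> \<in> short_stack_words s T" for \<omega>
  proof -
    define n where "n = discovered (dfs_run \<omega>)"
    have n: "n \<le> T" "card (finished (dfs_run \<omega>)) = s"
      using that unfolding short_stack_words_def n_def by auto
    have "real k ^ (n - 1) \<le> real k ^ T" using k n by (intro power_increasing) auto
    moreover have "(real n / real m) ^ (k * s - (n - 1)) \<le> (real T / real m) ^ (k * s - (n - 1))"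
      using n by (intro power_mono divide_right_mono) auto
    moreover have "real T / real m \<le> 1" using T by (cases "m = 0") (auto simp: divide_le_eq_1)
    then have "(real T / real m) ^ (k * s - (n - 1)) \<le> (real T / real m) ^ (k * s - T)"
      using n by (intro power_decreasing) auto
    ultimately show ?thesis
      unfolding dfs_weight_def Let_def n_def[symmetric] n(2) by (intro mult_mono) auto
  qed
  then have "(\<Sum>\<omega>\<in>short_stack_words s T. dfs_weight k m \<omega>)
      \<le> real (card (short_stack_words s T)) * (real k ^ T * (real T / real m) ^ (k * s - T))"
    by (rule sum_bounded_above)
  also have "\<dots> \<le> 2 ^ Suc (2 * T) * (real k ^ T * (real T / real m) ^ (k * s - T))"
  proof (rule mult_right_mono)
    have "card (short_stack_words s T) \<le> card {\<omega>::bool list. length \<omega> \<le> 2 * T}"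
      by (rule card_mono) (auto simp: short_stack_words_def finite_lists_length_le[of "UNIV :: bool set", simplified])
    then show "real (card (short_stack_words s T)) \<le> 2 ^ Suc (2 * T)"
      using card_bool_lists_le[of "2 * T"] by (metis of_nat_le_iff of_nat_numeral of_nat_power order_trans)
  qed simp
  finally show ?thesis by (simp add: mult.assoc)
qed

lemma sum_dfs_weight_exhausted_words_le:
  "(\<Sum>\<omega>\<in>exhausted_words s. dfs_weight k m \<omega>)
     \<le> (\<Sum>n\<in>{1..s}. 2 ^ (2 * n - 1) * real k ^ (n - 1) * (real n / real m) ^ (k * n - (n - 1)))"
proof -
  have "(\<Sum>\<omega>\<in>exhausted_words s. dfs_weight k m \<omega>)
      = (\<Sum>n\<in>{1..s}. \<Sum>\<omega>\<in>{\<omega>\<in>exhausted_words s. discovered (dfs_run \<omega>) = n}. dfs_weight k m \<omega>)"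
    using dfs_wf_discovered_pos
    by (intro sum.group[symmetric] finite_exhausted_words) (auto simp: exhausted_words_def)
  also have "\<dots> \<le> (\<Sum>n\<in>{1..s}. 2 ^ (2 * n - 1) * real k ^ (n - 1) * (real n / real m) ^ (k * n - (n - 1)))"
  proof (rule sum_mono)
    fix n assume "n \<in> {1..s}"
    define W where "W = {\<omega>\<in>exhausted_words s. discovered (dfs_run \<omega>) = n}"
    have "card W \<le> card {\<omega>::bool list. length \<omega> = 2 * n - 1}"
      using exhausted_words_length(1)
      by (intro card_mono) (auto simp: W_def finite_lists_length_eq[of "UNIV :: bool set", simplified])
    also have "\<dots> = 2 ^ (2 * n - 1)" using card_lists_length_eq[of "UNIV :: bool set"] by simp
    finally have "real (card W) \<le> 2 ^ (2 * n - 1)" by (metis of_nat_le_iff of_nat_numeral of_nat_power)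
    moreover have "dfs_weight k m \<omega> = real k ^ (n - 1) * (real n / real m) ^ (k * n - (n - 1))" if "\<omega> \<in> W" for \<omega>
      using that exhausted_words_length(2) unfolding W_def dfs_weight_def Let_def by auto
    ultimately show "(\<Sum>\<omega>\<in>W. dfs_weight k m \<omega>) \<le> 2 ^ (2 * n - 1) * real k ^ (n - 1) * (real n / real m) ^ (k * n - (n - 1))"
      by (simp add: mult_right_mono mult.assoc)
  qed
  finally show ?thesis .
qed

lemma exhausted_term_le:
  fixes k m n :: nat
  assumes n: "1 \<le> n" "2 * n \<le> m" and k: "1 \<le> k" "32 * real k \<le> 2 ^ k"
  shows "2 ^ (2 * n - 1) * real k ^ (n - 1) * (real n / real m) ^ (k * n - (n - 1)) \<le> (1 / real m) * (1 / 2) ^ n"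
proof -
  define x where "x = real n / real m"
  have m_pos: "0 < m" using n by simp
  have x: "0 \<le> x" "x \<le> 1 / 2"
    unfolding x_def using n m_pos by (simp_all add: field_simps)
  have x_le: "x \<le> 2 ^ n / real m" unfolding x_def
    by (intro divide_right_mono) (use less_exp[of n] in \<open>auto simp: of_nat_less_numeral_power_cancel_iff\<close>)
  have "k * n - (n - 1) = (k - 1) * n + 1" using k n by (simp add: diff_mult_distrib Suc_diff_le)
  then have "x ^ (k * n - (n - 1)) = x * (x ^ (k - 1)) ^ n"
    by (simp add: power_add power_mult[symmetric] mult.commute)
  also have "\<dots> \<le> 2 ^ n / real m * ((1 / 2) ^ (k - 1)) ^ n"
    using x x_le by (intro mult_mono power_mono) auto
  finally have x_pow: "x ^ (k * n - (n - 1)) \<le> 2 ^ n / real m * ((1 / 2) ^ (k - 1)) ^ n" .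
  have "(2::real) ^ (2 * n - 1) \<le> 4 ^ n"
    using power_increasing[of "2 * n - 1" "2 * n" "2::real"] by (simp add: power_mult)
  moreover have "real k ^ (n - 1) \<le> real k ^ n" using k by (intro power_increasing) auto
  ultimately have "2 ^ (2 * n - 1) * real k ^ (n - 1) * x ^ (k * n - (n - 1))
      \<le> 4 ^ n * real k ^ n * (2 ^ n / real m * ((1 / 2) ^ (k - 1)) ^ n)"
    using x_pow x(1) by (intro mult_mono) auto
  also have "\<dots> = (1 / real m) * (4 * 2 * real k * (1 / 2) ^ (k - 1)) ^ n"
    by (simp only: power_mult_distrib divide_inverse mult_ac mult_1_left)
  also have "\<dots> \<le> (1 / real m) * (1 / 2) ^ n"
  proof -
    obtain k' where k': "k = Suc k'" using k by (cases k) auto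
    then have "16 * real k \<le> 2 ^ k'" using k by simp
    then have "4 * 2 * real k * (1 / 2) ^ (k - 1) \<le> 1 / 2"
      using k' by (simp add: power_one_over pos_divide_le_eq)
    then show ?thesis by (intro mult_left_mono power_mono) auto
  qed
  finally show ?thesis unfolding x_def .
qed

lemma exhausted_sum_le:
  fixes k m s :: nat
  assumes "2 * s \<le> m" "1 \<le> k" "32 * real k \<le> 2 ^ k"
  shows "(\<Sum>n\<in>{1..s}. 2 ^ (2 * n - 1) * real k ^ (n - 1) * (real n / real m) ^ (k * n - (n - 1))) \<le> 1 / real m"
proof -
  have "(\<Sum>n\<in>{1..s}. 2 ^ (2 * n - 1) * real k ^ (n - 1) * (real n / real m) ^ (k * n - (n - 1)))
      \<le> (\<Sum>n\<in>{1..s}. (1 / real m) * (1 / 2) ^ n)"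
    using assms by (intro sum_mono exhausted_term_le) auto
  also have "\<dots> = (1 / real m) * (1 - (1 / 2) ^ s)"
    by (induction s) (auto simp: sum_distrib_left[symmetric] power_Suc algebra_simps)
  also have "\<dots> \<le> 1 / real m" by (simp add: divide_right_mono)
  finally show ?thesis .
qed

lemma short_stack_bound_le:
  fixes k m s T :: nat and \<epsilon> q :: real
  assumes m: "0 < m" and Tm: "T \<le> m" and Tq: "real T \<le> q * real m" and q0: "0 < q" and q1: "q < 1"
    and s: "\<epsilon> * real m / 4 \<le> real s" and k1: "1 \<le> k"
  shows "2 ^ Suc (2 * T) * real k ^ T * (real T / real m) ^ (k * s - T)
         \<le> 2 * (4 * real k * q powr (real k * \<epsilon> / 4 - 1)) ^ m"
proof -
  define c where "c = real k * \<epsilon> / 4 - 1"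
  have a: "2 ^ Suc (2 * T) * real k ^ T = 2 * (4 * real k) ^ T"
    by (simp add: power_mult power_mult_distrib)
  have a2: "(4 * real k) ^ T \<le> (4 * real k) ^ m" using k1 Tm by (intro power_increasing) auto
  have b1: "(real T / real m) ^ (k * s - T) \<le> q ^ (k * s - T)"
    using Tq m by (intro power_mono) (auto simp: field_simps)
  have b2: "q ^ (k * s - T) \<le> q ^ (k * s - m)"
    using Tm q0 q1 by (intro power_decreasing) auto
  have b3: "q ^ (k * s - m) \<le> q powr (c * real m)"
  proof -
    have "q ^ (k * s - m) = q powr real (k * s - m)" using q0 by (simp add: powr_realpow)
    also have "\<dots> \<le> q powr (c * real m)"
    proof (rule powr_mono')
      have "real k * (\<epsilon> * real m / 4) \<le> real k * real s" using s by (intro mult_left_mono) auto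
      then have "c * real m \<le> real (k * s) - real m" unfolding c_def by (simp add: algebra_simps)
      also have "\<dots> \<le> real (k * s - m)"
      proof (cases "m \<le> k * s")
        case True then show ?thesis by (simp add: of_nat_diff)
      next
        case False then have "k * s \<le> m" by simp
        then have "real (k * s) \<le> real m" by (simp only: of_nat_le_iff)
        then show ?thesis by simp
      qed
      finally show "c * real m \<le> real (k * s - m)" .
    qed (use q0 q1 in auto)
    finally show ?thesis .
  qed
  have b4: "q powr (c * real m) = (q powr c) ^ m"
    using q0 by (simp add: powr_powr[symmetric] powr_realpow)
  have "2 ^ Suc (2 * T) * real k ^ T * (real T / real m) ^ (k * s - T)
        = 2 * (4 * real k) ^ T * (real T / real m) ^ (k * s - T)" using a by simp
  also have "\<dots> \<le> 2 * (4 * real k) ^ m * (q powr c) ^ m"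
  proof -
    have "(real T / real m) ^ (k * s - T) \<le> (q powr c) ^ m" using b1 b2 b3 b4 by linarith
    then show ?thesis using a2 by (intro mult_mono) auto
  qed
  also have "\<dots> = 2 * (4 * real k * q powr c) ^ m" by (simp add: power_mult_distrib)
  finally show ?thesis unfolding c_def .
qed

lemma search_parameters_exist:
  fixes m :: nat and \<epsilon> :: real
  assumes e: "0 < \<epsilon>" "\<epsilon> < 1" and m: "8 \<le> \<epsilon> * real m"
  obtains s L :: nat where "1 \<le> s" "\<epsilon> * real m / 4 \<le> real s" "2 * s \<le> m"
    "(1 - \<epsilon>) * real m \<le> real L" "real (s + L) \<le> (1 - \<epsilon> / 2) * real m"
proof
  define x where "x = \<epsilon> * real m / 4"
  have "\<epsilon> * real m \<le> real m" using e by (simp add: mult_left_le_one_le)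
  then have x: "2 \<le> x" "x \<le> real m / 4" unfolding x_def using m by auto
  show "1 \<le> nat \<lfloor>x\<rfloor> + 1" by simp
  have s: "x \<le> real (nat \<lfloor>x\<rfloor> + 1)" "real (nat \<lfloor>x\<rfloor> + 1) \<le> x + 1" using x(1) by linarith+
  then show "\<epsilon> * real m / 4 \<le> real (nat \<lfloor>x\<rfloor> + 1)" unfolding x_def by simp
  have "2 * r \<le> real m" if "r \<le> x + 1" for r using that x by linarith
  then have "real (2 * (nat \<lfloor>x\<rfloor> + 1)) \<le> real m"
    unfolding of_nat_mult of_nat_numeral using s(2) .
  then show "2 * (nat \<lfloor>x\<rfloor> + 1) \<le> m" by (simp only: of_nat_le_iff)
  have L: "(1 - \<epsilon>) * real m \<le> real (nat \<lceil>(1 - \<epsilon>) * real m\<rceil>)"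
    "real (nat \<lceil>(1 - \<epsilon>) * real m\<rceil>) \<le> (1 - \<epsilon>) * real m + 1"
    using e by (simp_all add: real_nat_ceiling_ge)
  then show "(1 - \<epsilon>) * real m \<le> real (nat \<lceil>(1 - \<epsilon>) * real m\<rceil>)" by simp
  show "real (nat \<lfloor>x\<rfloor> + 1 + nat \<lceil>(1 - \<epsilon>) * real m\<rceil>) \<le> (1 - \<epsilon> / 2) * real m"
    using s(2) L(2) x(1) unfolding x_def by (simp add: algebra_simps)
qed

context
  fixes V :: "'a set" and E :: "'a \<Rightarrow> 'a \<Rightarrow> bool" and k :: nat
  assumes graph: "simple_graph V E" and k_pos: "1 \<le> k" and k_le: "k \<le> min_degree V E"
begin

lemma finite_vertices: "finite V"
  using graph unfolding simple_graph_def by auto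

lemma nbrs_subset: "nbrs V E y \<subseteq> V" and finite_nbrs: "finite (nbrs V E y)"
  using finite_vertices unfolding nbrs_def by auto

lemma min_degree_le_card_nbrs: "y \<in> V \<Longrightarrow> min_degree V E \<le> card (nbrs V E y)"
  unfolding min_degree_def using finite_vertices by (intro Min_le) auto

lemma k_le_card_nbrs: "y \<in> V \<Longrightarrow> k \<le> card (nbrs V E y)"
  using min_degree_le_card_nbrs k_le by (meson order_trans)

lemma choice_pmf_eq: "y \<in> V \<Longrightarrow> choice_pmf V E k y = pmf_of_set {S. S \<subseteq> nbrs V E y \<and> card S = k}"
  using k_le_card_nbrs unfolding choice_pmf_def by simp

lemma set_pmf_choices_subset_nbrs:
  assumes c: "c \<in> set_pmf (choices_pmf V E k)" and y: "y \<in> V"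
  shows "c y \<subseteq> nbrs V E y"
proof -
  have "c y \<in> set_pmf (choice_pmf V E k y)"
    using c y set_Pi_pmf[OF finite_vertices, of "{}" "choice_pmf V E k"]
    unfolding choices_pmf_def PiE_dflt_def by auto
  moreover have "{S. S \<subseteq> nbrs V E y \<and> card S = k} \<noteq> {}"
    using obtain_subset_with_card_n[OF k_le_card_nbrs[OF y]] by blast
  ultimately show ?thesis using choice_pmf_eq[OF y] finite_nbrs by auto
qed

lemma prob_choice_superset_le:
  assumes y: "y \<in> V"
  shows "measure_pmf.prob (choice_pmf V E k y) {S. A \<subseteq> S} \<le> (real k / real (card (nbrs V E y))) ^ card A"
proof -
  have "card (nbrs V E y) > 0" using k_le_card_nbrs[OF y] k_pos by linarith
  then show ?thesis
    using prob_k_subset_between_le[OF finite_nbrs k_le_card_nbrs[OF y], of A UNIV]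
    unfolding choice_pmf_eq[OF y] by simp
qed

lemma prob_choice_between_le:
  assumes y: "y \<in> V" and X: "finite X"
  shows "measure_pmf.prob (choice_pmf V E k y) {S. A \<subseteq> S \<and> S \<subseteq> X}
     \<le> (real k / real (card (nbrs V E y))) ^ card A * (real (card X) / real (min_degree V E)) ^ (k - card A)"
proof -
  have m_pos: "min_degree V E > 0" using k_pos k_le by linarith
  have "real (card (X \<inter> nbrs V E y)) / real (card (nbrs V E y)) \<le> real (card X) / real (min_degree V E)"
    using card_mono[OF X, of "X \<inter> nbrs V E y"] min_degree_le_card_nbrs[OF y] m_pos by (simp add: frac_le)
  then have "(real (card (X \<inter> nbrs V E y)) / real (card (nbrs V E y))) ^ (k - card A)
      \<le> (real (card X) / real (min_degree V E)) ^ (k - card A)"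
    by (intro power_mono) auto
  then show ?thesis
    using prob_k_subset_between_le[OF finite_nbrs k_le_card_nbrs[OF y], of A X]
    unfolding choice_pmf_eq[OF y] by (meson mult_left_mono order_trans zero_le_divide_iff of_nat_0_le_iff zero_le_power)
qed

lemma prob_dfs_event_le:
  fixes \<omega> xs
  defines "n \<equiv> discovered (dfs_run \<omega>)" and "P \<equiv> finished (dfs_run \<omega>)"
    and "par \<equiv> parent (dfs_run \<omega>)" and "m \<equiv> min_degree V E"
  assumes len: "length xs = n" and dist: "distinct xs" and xs_V: "set xs \<subseteq> V"
    and n_le: "n \<le> m" and par: "\<forall>i\<in>{1..<n}. par i < i" and P_lt: "P \<subseteq> {..<n}"
  shows "measure_pmf.prob (choices_pmf V E k) (dfs_event V \<omega> xs)
     \<le> (\<Prod>i\<in>{1..<n}. real k / real (card (nbrs V E (xs ! par i)))) *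
        (real n / real m) ^ (k * card P - (n - 1))"
proof -
  define I where "I = {1..<n}"
  define h where "h i = xs ! par i" for i
  define cnt where "cnt y = card {i\<in>I. h i = y}" for y
  define popped where "popped = (!) xs ` P"
  define d where "d y = card (nbrs V E y)" for y
  define A where "A y = (!) xs ` {i\<in>I. h i = y}" for y
  have h_V: "h ` I \<subseteq> V"
  proof
    fix y assume "y \<in> h ` I"
    then obtain i where i: "i \<in> I" "y = xs ! par i" unfolding h_def by auto
    then have "par i < i" using par unfolding I_def by blast
    then have "par i < length xs" using i len unfolding I_def by auto
    then show "y \<in> V" using i xs_V nth_mem by blast
  qed
  have inj: "inj_on ((!) xs) {..<n}" using dist len by (simp add: inj_on_def nth_eq_iff_index_eq)
  have card_A: "card (A y) = cnt y" for y
    unfolding A_def cnt_def by (rule card_image, rule inj_on_subset[OF inj]) (auto simp: I_def)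
  have "dfs_event V \<omega> xs = Pi V (\<lambda>y. {S. A y \<subseteq> S \<and> (y \<in> popped \<longrightarrow> S \<subseteq> set xs)})"
    unfolding dfs_event_def A_def popped_def I_def h_def n_def P_def par_def by blast
  then have "measure_pmf.prob (choices_pmf V E k) (dfs_event V \<omega> xs)
      = (\<Prod>y\<in>V. measure_pmf.prob (choice_pmf V E k y) {S. A y \<subseteq> S \<and> (y \<in> popped \<longrightarrow> S \<subseteq> set xs)})"
    unfolding choices_pmf_def by (simp add: measure_Pi_pmf_Pi[OF finite_vertices])
  also have "\<dots> \<le> (\<Prod>y\<in>V. (real k / real (d y)) ^ cnt y *
                      (if y \<in> popped then (real n / real m) ^ (k - cnt y) else 1))"
  proof (intro prod_mono conjI)
    fix y assume y: "y \<in> V"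
    show "measure_pmf.prob (choice_pmf V E k y) {S. A y \<subseteq> S \<and> (y \<in> popped \<longrightarrow> S \<subseteq> set xs)}
        \<le> (real k / real (d y)) ^ cnt y * (if y \<in> popped then (real n / real m) ^ (k - cnt y) else 1)"
      using prob_choice_superset_le[OF y, of "A y"] prob_choice_between_le[OF y, of "set xs" "A y"]
        distinct_card[OF dist] len
      unfolding card_A d_def m_def by (cases "y \<in> popped") auto
  qed auto
  also have "\<dots> = (\<Prod>i\<in>I. real k / real (d (h i))) * (\<Prod>y\<in>popped. (real n / real m) ^ (k - cnt y))"
  proof -
    have "popped \<subseteq> V"
    proof
      fix y assume "y \<in> popped"
      then obtain j where "j < length xs" "y = xs ! j" using P_lt len unfolding popped_def by auto
      then show "y \<in> V" using xs_V nth_mem by blast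
    qed
    then show ?thesis
      using prod_power_card_fibres[OF finite_vertices _ h_V, of "\<lambda>y. real k / real (d y)"] finite_vertices
      unfolding cnt_def I_def by (simp add: prod.distrib prod.If_cases Int_absorb1)
  qed
  also have "(\<Prod>y\<in>popped. (real n / real m) ^ (k - cnt y)) \<le> (real n / real m) ^ (k * card P - (n - 1))"
  proof -
    have "card popped = card P" unfolding popped_def using inj P_lt by (meson card_image inj_on_subset)
    moreover have "finite popped" "card I = n - 1" using P_lt finite_subset unfolding popped_def I_def by auto
    moreover have "real n / real m \<le> 1" using n_le by (cases "m = 0") auto
    ultimately show ?thesis
      using prod_power_diff_card_fibres_le[of I popped "real n / real m" k h] unfolding cnt_def I_def by simp
  qed
  finally show ?thesis
    unfolding I_def h_def d_def by (simp add: mult_left_mono prod_nonneg)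
qed

lemma sum_prob_dfs_event_le:
  assumes v0: "v0 \<in> V" and wf: "dfs_wf \<omega>" and n_le: "discovered (dfs_run \<omega>) \<le> min_degree V E"
  shows "(\<Sum>xs\<in>tree_embeddings V (nbrs V E) v0 (parent (dfs_run \<omega>)) (discovered (dfs_run \<omega>)) \<inter> {xs. distinct xs}.
            measure_pmf.prob (choices_pmf V E k) (dfs_event V \<omega> xs))
         \<le> dfs_weight k (min_degree V E) \<omega>"
proof -
  define n P par m where "n = discovered (dfs_run \<omega>)" "P = finished (dfs_run \<omega>)"
    "par = parent (dfs_run \<omega>)" "m = min_degree V E"
  define Q where "Q = (real n / real m) ^ (k * card P - (n - 1))"
  define f where "f y = real k / real (card (nbrs V E y))" for y
  have par_lt: "\<forall>i\<in>{1..<n}. par i < i" and P_lt: "P \<subseteq> {..<n}" and n_pos: "1 \<le> n"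
    using wf dfs_wf_discovered_pos[OF wf] unfolding dfs_wf_def Let_def n_P_par_m_def by auto
  have "(\<Sum>xs\<in>tree_embeddings V (nbrs V E) v0 par n \<inter> {xs. distinct xs}.
            measure_pmf.prob (choices_pmf V E k) (dfs_event V \<omega> xs))
     \<le> (\<Sum>xs\<in>tree_embeddings V (nbrs V E) v0 par n \<inter> {xs. distinct xs}. (\<Prod>i\<in>{1..<n}. f (xs ! par i)) * Q)"
    unfolding Q_def f_def n_P_par_m_def
    by (intro sum_mono prob_dfs_event_le) (use n_le par_lt P_lt in \<open>auto simp: tree_embeddings_def n_P_par_m_def\<close>)
  also have "\<dots> \<le> (\<Sum>xs\<in>tree_embeddings V (nbrs V E) v0 par n. \<Prod>i\<in>{1..<n}. f (xs ! par i)) * Q"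
    unfolding sum_distrib_right
    by (intro sum_mono2 finite_tree_embeddings finite_vertices) (auto simp: f_def Q_def intro!: mult_nonneg_nonneg prod_nonneg)
  also have "\<dots> \<le> real k ^ (n - 1) * Q"
  proof (intro mult_right_mono sum_prod_tree_embeddings_le[OF finite_vertices v0])
    fix y assume "y \<in> V"
    then have "card (nbrs V E y) > 0" using k_le_card_nbrs k_pos by (meson less_le_trans zero_less_one)
    then show "f y * real (card (nbrs V E y)) \<le> real k" unfolding f_def by simp
  qed (use par_lt n_pos nbrs_subset finite_nbrs in \<open>auto simp: f_def Q_def\<close>)
  finally show ?thesis unfolding dfs_weight_def Let_def Q_def n_P_par_m_def .
qed

lemma no_long_path_dfs_witness:
  assumes v0: "v0 \<in> V" and s: "1 \<le> s" and T: "T = s + L" and L: "\<Lambda> \<le> real L"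
    and c: "c \<in> set_pmf (choices_pmf V E k)" and no_path: "\<not> has_path_of_length_ge (Gk_edge c) \<Lambda>"
  shows "\<exists>\<omega>\<in>short_stack_words s T \<union> exhausted_words s.
           \<exists>xs\<in>tree_embeddings V (nbrs V E) v0 (parent (dfs_run \<omega>)) (discovered (dfs_run \<omega>)) \<inter> {xs. distinct xs}.
             c \<in> dfs_event V \<omega> xs"
proof -
  have c_nbrs: "c y \<subseteq> nbrs V E y" if "y \<in> V" for y using set_pmf_choices_subset_nbrs[OF c that] .
  obtain \<omega> xs where wf: "dfs_wf \<omega>" and lab: "dfs_labels V c v0 \<omega> xs"
    and fin_le: "card (finished (dfs_run \<omega>)) \<le> s"
    and stop: "stack (dfs_run \<omega>) = [] \<or> card (finished (dfs_run \<omega>)) = s"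
    using dfs_run_until[OF dfs_wf_Nil dfs_labels_Nil[OF v0] finite_vertices] c_nbrs nbrs_subset s
    by (metis dfs_run_Nil(1,3) card.empty less_le_trans list.distinct(1) zero_less_one subset_trans)
  let ?st = "dfs_run \<omega>"
  have n_eq: "discovered ?st = card (finished ?st) + length (stack ?st)" by (rule dfs_wf_discovered_eq[OF wf])
  have len_\<omega>: "length \<omega> + 1 = discovered ?st + card (finished ?st)"
    using wf unfolding dfs_wf_def Let_def by simp
  have "xs \<in> tree_embeddings V (nbrs V E) v0 (parent ?st) (discovered ?st) \<inter> {xs. distinct xs}"
  proof -
    have "xs ! i \<in> nbrs V E (xs ! parent ?st i)" if i: "i \<in> {1..<discovered ?st}" for i
    proof -
      have "xs ! parent ?st i \<in> V"
        using lab wf i unfolding dfs_labels_def dfs_wf_def Let_def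
        by (metis atLeastLessThan_iff nth_mem order.strict_trans subsetD)
      then show ?thesis using lab c_nbrs i unfolding dfs_labels_def Let_def by blast
    qed
    then show ?thesis using lab unfolding dfs_labels_def tree_embeddings_def Let_def by auto
  qed
  moreover have "\<omega> \<in> short_stack_words s T \<union> exhausted_words s"
  proof (cases "stack ?st = []")
    case True
    then show ?thesis using wf n_eq fin_le unfolding exhausted_words_def by simp
  next
    case False
    then have "is_path (Gk_edge c) (map ((!) xs) (stack ?st))" by (rule dfs_stack_is_path[OF wf lab])
    then have "real (length (stack ?st) - 1) < \<Lambda>"
      using no_path unfolding has_path_of_length_ge_def by (metis length_map not_le)
    then have "length (stack ?st) \<le> L" using L by linarith
    then show ?thesis
      using False wf stop n_eq len_\<omega> T unfolding short_stack_words_def by auto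
  qed
  ultimately show ?thesis using dfs_labels_in_dfs_event[OF lab] by blast
qed

lemma prob_no_long_path_le:
  defines "m \<equiv> min_degree V E"
  assumes v0: "v0 \<in> V" and s: "1 \<le> s" and T: "T = s + L" "T \<le> m" and L: "\<Lambda> \<le> real L"
  shows "measure_pmf.prob (choices_pmf V E k) {c. \<not> has_path_of_length_ge (Gk_edge c) \<Lambda>}
     \<le> (\<Sum>\<omega>\<in>short_stack_words s T. dfs_weight k m \<omega>) + (\<Sum>\<omega>\<in>exhausted_words s. dfs_weight k m \<omega>)"
proof -
  define pr where "pr = measure_pmf.prob (choices_pmf V E k)"
  define W where "W = short_stack_words s T \<union> exhausted_words s"
  define S where "S \<omega> = tree_embeddings V (nbrs V E) v0 (parent (dfs_run \<omega>)) (discovered (dfs_run \<omega>)) \<inter> {xs. distinct xs}" for \<omega>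
  have fin_W: "finite W" unfolding W_def by (simp add: finite_short_stack_words finite_exhausted_words)
  have fin_S: "finite (S \<omega>)" for \<omega> unfolding S_def using finite_tree_embeddings[OF finite_vertices] by simp
  have "{c. \<not> has_path_of_length_ge (Gk_edge c) \<Lambda>} \<inter> set_pmf (choices_pmf V E k)
      \<subseteq> (\<Union>p\<in>Sigma W S. dfs_event V (fst p) (snd p))"
    using no_long_path_dfs_witness[OF v0 s T(1) L] unfolding W_def S_def by fastforce
  then have "pr {c. \<not> has_path_of_length_ge (Gk_edge c) \<Lambda>} \<le> pr (\<Union>p\<in>Sigma W S. dfs_event V (fst p) (snd p))"
    unfolding pr_def by (subst measure_Int_set_pmf[symmetric]) (rule measure_pmf.finite_measure_mono, auto)
  also have "\<dots> \<le> (\<Sum>p\<in>Sigma W S. pr (dfs_event V (fst p) (snd p)))"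
    unfolding pr_def by (rule measure_pmf.finite_measure_subadditive_finite) (use fin_W fin_S in auto)
  also have "\<dots> = (\<Sum>\<omega>\<in>W. \<Sum>xs\<in>S \<omega>. pr (dfs_event V \<omega> xs))"
    by (subst sum.Sigma) (use fin_W fin_S in \<open>auto simp: case_prod_beta\<close>)
  also have "\<dots> \<le> (\<Sum>\<omega>\<in>W. dfs_weight k m \<omega>)"
  proof (rule sum_mono)
    fix \<omega> assume "\<omega> \<in> W"
    then have "dfs_wf \<omega>" "discovered (dfs_run \<omega>) \<le> m"
      using T unfolding W_def short_stack_words_def exhausted_words_def by auto
    then show "(\<Sum>xs\<in>S \<omega>. pr (dfs_event V \<omega> xs)) \<le> dfs_weight k m \<omega>"
      unfolding S_def pr_def m_def by (rule sum_prob_dfs_event_le[OF v0])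
  qed
  also have "\<dots> = (\<Sum>\<omega>\<in>short_stack_words s T. dfs_weight k m \<omega>) + (\<Sum>\<omega>\<in>exhausted_words s. dfs_weight k m \<omega>)"
    unfolding W_def
    by (rule sum.union_disjoint[OF finite_short_stack_words finite_exhausted_words])
      (auto simp: short_stack_words_def exhausted_words_def)
  finally show ?thesis unfolding pr_def .
qed

lemma prob_no_long_path_le_inverse:
  fixes \<epsilon> :: real
  defines "m \<equiv> min_degree V E" and "q \<equiv> 1 - \<epsilon> / 2"
  assumes ne: "V \<noteq> {}" and e: "0 < \<epsilon>" "\<epsilon> < 1" and m: "8 \<le> \<epsilon> * real m"
    and k_large: "32 * real k \<le> 2 ^ k" "4 * real k * q powr (real k * \<epsilon> / 4 - 1) \<le> 1 / 2"
  shows "measure_pmf.prob (choices_pmf V E k) {c. \<not> has_path_of_length_ge (Gk_edge c) ((1 - \<epsilon>) * real m)}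
         \<le> 2 * (1 / 2) ^ m + 1 / real m"
proof -
  obtain v0 where v0: "v0 \<in> V" using ne by auto
  obtain s L where s: "1 \<le> s" "\<epsilon> * real m / 4 \<le> real s" "2 * s \<le> m"
    and L: "(1 - \<epsilon>) * real m \<le> real L" and T: "real (s + L) \<le> q * real m"
    using search_parameters_exist[OF e m] unfolding q_def by metis
  have q: "0 < q" "q < 1" unfolding q_def using e by auto
  then have "q * real m \<le> real m" by (simp add: mult_left_le_one_le)
  then have T_le: "s + L \<le> m" using T by linarith
  have "measure_pmf.prob (choices_pmf V E k) {c. \<not> has_path_of_length_ge (Gk_edge c) ((1 - \<epsilon>) * real m)}
     \<le> (\<Sum>\<omega>\<in>short_stack_words s (s + L). dfs_weight k m \<omega>) + (\<Sum>\<omega>\<in>exhausted_words s. dfs_weight k m \<omega>)"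
    unfolding m_def by (rule prob_no_long_path_le[OF v0 s(1) refl T_le[unfolded m_def] L[unfolded m_def]])
  also have "(\<Sum>\<omega>\<in>short_stack_words s (s + L). dfs_weight k m \<omega>) \<le> 2 * (1 / 2) ^ m"
  proof -
    have "(\<Sum>\<omega>\<in>short_stack_words s (s + L). dfs_weight k m \<omega>)
        \<le> 2 * (4 * real k * q powr (real k * \<epsilon> / 4 - 1)) ^ m"
      using k_pos k_le T_le T q s(2) unfolding m_def
      by (intro order.trans[OF sum_dfs_weight_short_stack_words_le short_stack_bound_le]) auto
    also have "\<dots> \<le> 2 * (1 / 2) ^ m" using k_large(2) by (intro mult_left_mono power_mono) auto
    finally show ?thesis .
  qed
  also have "(\<Sum>\<omega>\<in>exhausted_words s. dfs_weight k m \<omega>) \<le> 1 / real m"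
    using s(3) k_pos k_large(1)
    by (intro order.trans[OF sum_dfs_weight_exhausted_words_le exhausted_sum_le]) auto
  finally show ?thesis by simp
qed

end

lemma has_path_of_length_ge_nonpos: "\<Lambda> \<le> 0 \<Longrightarrow> has_path_of_length_ge F \<Lambda>"
  unfolding has_path_of_length_ge_def is_path_def by (intro exI[of _ "[undefined]"]) simp

lemma eventually_k_large:
  fixes \<epsilon> :: real
  assumes e: "0 < \<epsilon>" "\<epsilon> < 1"
  shows "\<forall>\<^sub>F k in sequentially. 1 \<le> k \<and> 32 * real k \<le> 2 ^ k \<and>
           4 * real k * (1 - \<epsilon> / 2) powr (real k * \<epsilon> / 4 - 1) \<le> 1 / 2"
proof -
  define q where "q = 1 - \<epsilon> / 2"
  define a where "a = q powr (\<epsilon> / 4)"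
  have q: "0 < q" "q < 1" unfolding q_def using e by auto
  then have a: "0 < a" "a < 1" unfolding a_def using e powr_less_mono2[of "\<epsilon> / 4" q 1] by auto
  have "(\<lambda>k. real k * (1 / 2) ^ k) \<longlonglongrightarrow> 0" "(\<lambda>k. real k * a ^ k) \<longlonglongrightarrow> 0"
    using a by (auto intro: powser_times_n_limit_0)
  then have "\<forall>\<^sub>F k in sequentially. real k * (1 / 2) ^ k < 1 / 32 \<and> real k * a ^ k < q / 8"
    using q by (intro eventually_conj order_tendstoD) auto
  moreover have "\<forall>\<^sub>F k in sequentially. 1 \<le> k" by (rule eventually_ge_at_top)
  ultimately show ?thesis
  proof eventually_elim
    case (elim k)
    have "q powr (real k * \<epsilon> / 4 - 1) = a ^ k / q"
      using q unfolding a_def by (simp add: powr_diff powr_powr powr_realpow[symmetric] mult.commute)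
    then have "4 * real k * q powr (real k * \<epsilon> / 4 - 1) = (4 / q) * (real k * a ^ k)" by simp
    also have "\<dots> \<le> (4 / q) * (q / 8)" using elim q by (intro mult_left_mono) auto
    finally have "4 * real k * q powr (real k * \<epsilon> / 4 - 1) \<le> 1 / 2" using q by simp
    moreover have "32 * real k \<le> 2 ^ k" using elim by (simp add: power_one_over field_simps)
    ultimately show ?case using elim unfolding q_def by simp
  qed
qed

lemma prob_long_path_tendsto_1:
  fixes V :: "nat \<Rightarrow> 'a set" and E :: "nat \<Rightarrow> 'a \<Rightarrow> 'a \<Rightarrow> bool" and \<epsilon> :: real
  assumes graphs: "\<And>j. simple_graph (V j) (E j)" and nonempty: "\<And>j. V j \<noteq> {}"
    and m_inf: "filterlim (\<lambda>j. min_degree (V j) (E j)) at_top sequentially"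
    and e: "0 < \<epsilon>" "\<epsilon> < 1"
    and k: "1 \<le> k" "32 * real k \<le> 2 ^ k" "4 * real k * (1 - \<epsilon> / 2) powr (real k * \<epsilon> / 4 - 1) \<le> 1 / 2"
  shows "(\<lambda>j. measure_pmf.prob (choices_pmf (V j) (E j) k)
           {c. has_path_of_length_ge (Gk_edge c) ((1 - \<epsilon>) * real (min_degree (V j) (E j)))}) \<longlonglongrightarrow> 1"
proof -
  define md where "md j = min_degree (V j) (E j)" for j
  define p where "p j = measure_pmf.prob (choices_pmf (V j) (E j) k)
           {c. has_path_of_length_ge (Gk_edge c) ((1 - \<epsilon>) * real (md j))}" for j
  have md: "filterlim (\<lambda>j. real (md j)) at_top sequentially"
    using filterlim_compose[OF filterlim_real_sequentially m_inf] unfolding md_def by simp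
  have lim: "(\<lambda>j. 1 - (2 * (1 / 2) ^ md j + 1 / real (md j))) \<longlonglongrightarrow> 1 - (2 * 0 + 0)"
    using filterlim_compose[OF LIMSEQ_realpow_zero[of "1 / 2 :: real"] m_inf[folded md_def]]
      tendsto_divide_0[OF tendsto_const md[THEN filterlim_at_top_imp_at_infinity]]
    by (intro tendsto_intros) auto
  have lower: "\<forall>\<^sub>F j in sequentially. 1 - (2 * (1 / 2) ^ md j + 1 / real (md j)) \<le> p j"
  proof -
    have "\<forall>\<^sub>F j in sequentially. max (real k) (8 / \<epsilon>) \<le> real (md j)"
      using md unfolding filterlim_at_top by blast
    then show ?thesis
    proof eventually_elim
      case (elim j)
      have "k \<le> md j" using elim by simp
      moreover have "8 \<le> \<epsilon> * real (md j)" using elim e by (simp add: field_simps)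
      ultimately have "measure_pmf.prob (choices_pmf (V j) (E j) k)
          {c. \<not> has_path_of_length_ge (Gk_edge c) ((1 - \<epsilon>) * real (md j))} \<le> 2 * (1 / 2) ^ md j + 1 / real (md j)"
        unfolding md_def by (rule prob_no_long_path_le_inverse[OF graphs k(1) _ nonempty e _ k(2,3)])
      then show ?case
        using measure_pmf.prob_neg[of "choices_pmf (V j) (E j) k"
            "\<lambda>c. has_path_of_length_ge (Gk_edge c) ((1 - \<epsilon>) * real (md j))"]
        unfolding p_def by simp
    qed
  qed
  have upper: "\<forall>\<^sub>F j in sequentially. p j \<le> 1"
    unfolding p_def by (intro always_eventually allI measure_pmf.prob_le_1)
  have "p \<longlonglongrightarrow> 1" using tendsto_sandwich[OF lower upper _ tendsto_const] lim by simp
  then show ?thesis unfolding p_def md_def .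
qed

theorem theorem3:
  fixes V :: "nat \<Rightarrow> 'a set" and E :: "nat \<Rightarrow> 'a \<Rightarrow> 'a \<Rightarrow> bool"
  assumes graphs: "\<And>j. simple_graph (V j) (E j)"
    and nonempty: "\<And>j. V j \<noteq> {}"
    and n_inf: "filterlim (\<lambda>j. card (V j)) at_top sequentially"
    and m_inf: "filterlim (\<lambda>j. min_degree (V j) (E j)) at_top sequentially"
  shows "\<forall>\<epsilon>>0. \<exists>k\<^sub>\<epsilon>. \<forall>k\<ge>k\<^sub>\<epsilon>.
           (\<lambda>j. measure_pmf.prob (choices_pmf (V j) (E j) k)
                  {c. has_path_of_length_ge (Gk_edge c) ((1 - \<epsilon>) * real (min_degree (V j) (E j)))})
           \<longlonglongrightarrow> 1"
proof (intro allI impI)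
  fix \<epsilon> :: real assume e: "\<epsilon> > 0"
  show "\<exists>k\<^sub>\<epsilon>. \<forall>k\<ge>k\<^sub>\<epsilon>. (\<lambda>j. measure_pmf.prob (choices_pmf (V j) (E j) k)
          {c. has_path_of_length_ge (Gk_edge c) ((1 - \<epsilon>) * real (min_degree (V j) (E j)))}) \<longlonglongrightarrow> 1"
  proof (cases "\<epsilon> < 1")
    case True
    then obtain K where "\<forall>k\<ge>K. 1 \<le> k \<and> 32 * real k \<le> 2 ^ k \<and>
        4 * real k * (1 - \<epsilon> / 2) powr (real k * \<epsilon> / 4 - 1) \<le> 1 / 2"
      using eventually_k_large[OF e] unfolding eventually_sequentially by blast
    then show ?thesis using prob_long_path_tendsto_1[OF graphs nonempty m_inf e True] by blast
  next
    case False
    then have all: "{c. has_path_of_length_ge (Gk_edge c) ((1 - \<epsilon>) * real (min_degree (V j) (E j)))} = UNIV" for j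
      by (auto intro: has_path_of_length_ge_nonpos simp: mult_nonpos_nonneg)
    show ?thesis by (intro exI[of _ 0] allI impI) (simp add: all)
  qed
qed

end
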